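(* Let $\alpha\in\mathbb{N}_0$. (i) For every $y\in C^{(2\alpha+4)}(0,\infty)$ and $x>0$, $$(-1)^{\alpha+1}\prod_{j=0}^{\alpha+1}\Big\{L_{2,x}^{2j-1}-\frac{2j}{x}-j\Big\}y(x)=(-1)^{\alpha+1}L_{2,x}^{-1}\prod_{j=1}^{\alpha+1}\big\{L_{2,x}^{\alpha+1}-j\big\}y(x).$$ (ii) Denoting by $\mathcal{L}$ the operator on the right-hand side of (i), for every $n\in\mathbb{N}$ one has $\big[\mathcal{L}+(n)_{\alpha+2}\big]T_n^{\alpha}(x)=0$.
   Context: For real $\gamma$ (including $-1$), $L_{2,x}^{\gamma}=xD_x^2+(\gamma+1-x)D_x$, so $L_{2,x}^{-1}=x[D_x^2-D_x]$. The product $\prod_{j=a}^{b}\{A_j\}$ means $A_b\cdots A_a$, factors applied successively to the function on the right in increasing order of $j$. $(a)_k$ is the Pochhammer symbol. $L_n^{\gamma}(x)=\frac{(\gamma+1)_n}{n!}{}_1F_1(-n;\gamma+1;x)$ are the Laguerre polynomials, and for $n\ge1$, $T_n^{\alpha}(x)=-t_n^{\alpha}\,x\,L_{n-1}^{\alpha+2}(x)$ with $t_n^{\alpha}=(\alpha+2)_{n-1}/n!$. *)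

theory Defs
  imports "HOL-Analysis.Analysis"
begin

definition Ck_on :: "nat \<Rightarrow> real set \<Rightarrow> (real \<Rightarrow> real) \<Rightarrow> bool" where
  "Ck_on k S f \<longleftrightarrow>
     (\<forall>m<k. \<forall>x\<in>S. ((deriv ^^ m) f has_real_derivative (deriv ^^ Suc m) f x) (at x))
     \<and> continuous_on S ((deriv ^^ k) f)"

definition Lag_op :: "real \<Rightarrow> (real \<Rightarrow> real) \<Rightarrow> (real \<Rightarrow> real)" where
  "Lag_op \<gamma> f = (\<lambda>x. x * deriv (deriv f) x + (\<gamma> + 1 - x) * deriv f x)"

text \<open>Ordered operator product prod_{j=a}^{b} A_j = A_b ... A_a (A_a applied first).\<close>
definition op_prod :: "(nat \<Rightarrow> (real \<Rightarrow> real) \<Rightarrow> (real \<Rightarrow> real)) \<Rightarrow> nat \<Rightarrow> nat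
    \<Rightarrow> (real \<Rightarrow> real) \<Rightarrow> (real \<Rightarrow> real)" where
  "op_prod A a b f = fold A [a..<Suc b] f"

definition hyp1F1_term :: "nat \<Rightarrow> real \<Rightarrow> real \<Rightarrow> real" where
  "hyp1F1_term n c x = (\<Sum>k\<le>n. pochhammer (- real n) k / (pochhammer c k * fact k) * x ^ k)"

definition laguerre :: "nat \<Rightarrow> real \<Rightarrow> real \<Rightarrow> real" where
  "laguerre n \<gamma> x = pochhammer (\<gamma> + 1) n / fact n * hyp1F1_term n (\<gamma> + 1) x"

definition t_coef :: "nat \<Rightarrow> nat \<Rightarrow> real" where
  "t_coef \<alpha> n = pochhammer (real \<alpha> + 2) (n - 1) / fact n"

definition T_fun :: "nat \<Rightarrow> nat \<Rightarrow> real \<Rightarrow> real" where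
  "T_fun \<alpha> n x = - t_coef \<alpha> n * x * laguerre (n - 1) (real \<alpha> + 2) x"

definition lhs_factor :: "nat \<Rightarrow> (real \<Rightarrow> real) \<Rightarrow> (real \<Rightarrow> real)" where
  "lhs_factor j f = (\<lambda>x. Lag_op (2 * real j - 1) f x - (2 * real j / x) * f x - real j * f x)"

definition rhs_factor :: "nat \<Rightarrow> nat \<Rightarrow> (real \<Rightarrow> real) \<Rightarrow> (real \<Rightarrow> real)" where
  "rhs_factor \<alpha> j f = (\<lambda>x. Lag_op (real \<alpha> + 1) f x - real j * f x)"

definition calL :: "nat \<Rightarrow> (real \<Rightarrow> real) \<Rightarrow> (real \<Rightarrow> real)" where
  "calL \<alpha> f = (\<lambda>x. (-1) ^ (\<alpha> + 1) * Lag_op (-1) (op_prod (rhs_factor \<alpha>) 1 (\<alpha> + 1) f) x)"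

end

theory Submission
  imports Defs "HOL-Computational_Algebra.Polynomial"
begin

(*
  Write R(b, j) = L^b - j, so that the right-hand factors are R(alpha + 1, j).  For C^4
  functions the Laguerre operators satisfy the commutation rules
    L^(-1) R(g, c) = (L^g - (g + 1)/x - c) L^(-1),
    R(b + 1, a + 1) R(b + k, a) = R(b + k + 1, a + 1) R(b, a).
  By the first, the j-th left-hand factor applied after L^(-1) equals L^(-1) R(2j - 1, j);
  by the second, R(2m + 1, m + 1) R(m, m) ... R(m, 1) = R(m + 1, m + 1) ... R(m + 1, 1).

  Part (ii) is polynomial algebra.  Since L^(-1) h = x (h'' - h') and
  (D^2 - D) R(b, j) = R(b + 2, j + 1) (D^2 - D), the operator sends T = kappa x P, with
  P = 1F1(1 - n; alpha + 3; x), to (-1)^(alpha+1) kappa x prod_{j=2}^{alpha+2} (L^(alpha+3) - j)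
  applied to (D^2 - D)(x P).  Kummer's equation L^(alpha+2) P = (1 - n) P makes P - P' and P'
  eigenfunctions of L^(alpha+3) with eigenvalues 1 - n and 2 - n, and
  (D^2 - D)(x P) = -n (P - P') - (n + alpha + 1) P'.  The product multiplies both components by
  the same scalar -(-1)^(alpha+1) (n)_(alpha+2), so they recombine into a multiple of P.
*)

section \<open>Functions of class \<open>C\<^sup>k\<close>\<close>

lemma Ck_on_0_iff: "Ck_on 0 S f \<longleftrightarrow> continuous_on S f"
  unfolding Ck_on_def by simp

lemma Ck_on_Suc_iff:
  "Ck_on (Suc k) S f \<longleftrightarrow>
     (\<forall>x\<in>S. (f has_real_derivative deriv f x) (at x)) \<and> Ck_on k S (deriv f)"
  unfolding Ck_on_def
  apply (auto simp: funpow_Suc_right simp del: funpow.simps)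
  subgoal for m x by (cases m) (auto simp: funpow_Suc_right simp del: funpow.simps)
  done

lemma Ck_on_has_derivative:
  "Ck_on k S f \<Longrightarrow> m < k \<Longrightarrow> x \<in> S \<Longrightarrow>
     ((deriv ^^ m) f has_real_derivative (deriv ^^ Suc m) f x) (at x)"
  unfolding Ck_on_def by blast

lemma higher_deriv_cong_on_open:
  assumes "open S" "x \<in> S" "\<And>z. z \<in> S \<Longrightarrow> f z = g z"
  shows "(deriv ^^ n) f x = (deriv ^^ n) g x"
proof (rule higher_deriv_cong_ev[OF _ refl])
  show "\<forall>\<^sub>F z in nhds x. f z = g z"
    using eventually_nhds_in_open[OF assms(1,2)] by (rule eventually_mono) (use assms(3) in auto)
qed

lemma Ck_on_cong:
  assumes S: "open S" and fg: "\<And>x. x \<in> S \<Longrightarrow> f x = g x" and f: "Ck_on k S f"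
  shows "Ck_on k S g"
proof -
  have eq: "(deriv ^^ m) f x = (deriv ^^ m) g x" if "x \<in> S" for m x
    using higher_deriv_cong_on_open[OF S that fg] .
  show ?thesis
    unfolding Ck_on_def
  proof (intro conjI ballI allI impI)
    fix m x assume "m < k" "x \<in> S"
    then have "((deriv ^^ m) f has_real_derivative (deriv ^^ Suc m) f x) (at x)"
      using Ck_on_has_derivative[OF f] by blast
    then have "((deriv ^^ m) g has_real_derivative (deriv ^^ Suc m) f x) (at x)"
      by (rule has_field_derivative_transform_within_open[OF _ S \<open>x \<in> S\<close>]) (rule eq)
    then show "((deriv ^^ m) g has_real_derivative (deriv ^^ Suc m) g x) (at x)"
      using eq[OF \<open>x \<in> S\<close>, of "Suc m"] by simp
  next
    have "continuous_on S ((deriv ^^ k) f)"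
      using f by (simp add: Ck_on_def)
    with continuous_on_cong[OF refl eq] show "continuous_on S ((deriv ^^ k) g)"
      by (rule iffD1)
  qed
qed

lemma Ck_on_SucI:
  assumes "open S" "\<And>x. x \<in> S \<Longrightarrow> (f has_real_derivative f' x) (at x)" "Ck_on k S f'"
  shows "Ck_on (Suc k) S f"
  unfolding Ck_on_Suc_iff
proof
  have eq: "f' x = deriv f x" if "x \<in> S" for x
    using DERIV_imp_deriv[OF assms(2)[OF that]] by simp
  show "\<forall>x\<in>S. (f has_real_derivative deriv f x) (at x)"
    using assms(2) eq by simp
  show "Ck_on k S (deriv f)"
    using Ck_on_cong[OF assms(1) eq assms(3)] .
qed

lemma Ck_on_SucD: "Ck_on (Suc k) S f \<Longrightarrow> Ck_on k S f"
proof (induction k arbitrary: f)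
  case 0
  then have "\<forall>x\<in>S. isCont f x"
    unfolding Ck_on_Suc_iff using DERIV_isCont by blast
  then show ?case
    unfolding Ck_on_0_iff by (rule continuous_at_imp_continuous_on)
next
  case (Suc k)
  then show ?case by (metis Ck_on_Suc_iff)
qed

lemma Ck_on_le: "Ck_on n S f \<Longrightarrow> k \<le> n \<Longrightarrow> Ck_on k S f"
  by (induction n) (auto simp: le_Suc_eq intro: Ck_on_SucD)

lemma Ck_on_const: "open S \<Longrightarrow> Ck_on k S (\<lambda>x. c)"
proof (induction k arbitrary: c)
  case 0 then show ?case by (simp add: Ck_on_0_iff)
next
  case (Suc k)
  show ?case
    by (rule Ck_on_SucI[where f' = "\<lambda>x. 0", OF Suc.prems _ Suc.IH[OF Suc.prems]]) (rule DERIV_const)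
qed

lemma Ck_on_ident:
  assumes "open S"
  shows "Ck_on k S (\<lambda>x. x)"
proof (cases k)
  case 0 then show ?thesis by (simp add: Ck_on_0_iff)
next
  case (Suc k)
  show ?thesis unfolding Suc
    by (rule Ck_on_SucI[OF assms _ Ck_on_const[OF assms]]) (rule DERIV_ident)
qed

lemma Ck_on_add:
  "open S \<Longrightarrow> Ck_on k S f \<Longrightarrow> Ck_on k S g \<Longrightarrow> Ck_on k S (\<lambda>x. f x + g x)"
proof (induction k arbitrary: f g)
  case 0 then show ?case by (simp add: Ck_on_0_iff continuous_on_add)
next
  case (Suc k)
  then have df: "\<And>x. x \<in> S \<Longrightarrow> (f has_real_derivative deriv f x) (at x)"
    and dg: "\<And>x. x \<in> S \<Longrightarrow> (g has_real_derivative deriv g x) (at x)"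
    and "Ck_on k S (deriv f)" "Ck_on k S (deriv g)"
    by (simp_all add: Ck_on_Suc_iff)
  then have "Ck_on k S (\<lambda>x. deriv f x + deriv g x)"
    using Suc.IH Suc.prems(1) by blast
  moreover have "((\<lambda>x. f x + g x) has_real_derivative deriv f x + deriv g x) (at x)"
    if "x \<in> S" for x
    using df[OF that] dg[OF that] by (rule DERIV_add)
  ultimately show ?case
    by (rule Ck_on_SucI[OF Suc.prems(1), rotated])
qed

lemma Ck_on_mult:
  "open S \<Longrightarrow> Ck_on k S f \<Longrightarrow> Ck_on k S g \<Longrightarrow> Ck_on k S (\<lambda>x. f x * g x)"
proof (induction k arbitrary: f g)
  case 0 then show ?case by (simp add: Ck_on_0_iff continuous_on_mult)
next
  case (Suc k)
  then have df: "\<And>x. x \<in> S \<Longrightarrow> (f has_real_derivative deriv f x) (at x)"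
    and dg: "\<And>x. x \<in> S \<Longrightarrow> (g has_real_derivative deriv g x) (at x)"
    and "Ck_on k S (deriv f)" "Ck_on k S (deriv g)" "Ck_on k S f" "Ck_on k S g"
    by (simp_all add: Ck_on_Suc_iff Ck_on_SucD)
  then have "Ck_on k S (\<lambda>x. f x * deriv g x + deriv f x * g x)"
    by (intro Ck_on_add Suc.IH Suc.prems(1))
  moreover have "((\<lambda>x. f x * g x) has_real_derivative f x * deriv g x + deriv f x * g x) (at x)"
    if "x \<in> S" for x
    using df[OF that] dg[OF that] by (rule DERIV_mult')
  ultimately show ?case
    by (rule Ck_on_SucI[OF Suc.prems(1), rotated])
qed

lemma Ck_on_diff:
  assumes "open S" "Ck_on k S f" "Ck_on k S g"
  shows "Ck_on k S (\<lambda>x. f x - g x)"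
proof -
  have "Ck_on k S (\<lambda>x. f x + (-1) * g x)"
    by (intro Ck_on_add Ck_on_mult Ck_on_const assms)
  then show ?thesis by simp
qed

section \<open>Commutation rules for the factors \<open>L\<^sup>\<beta> - j\<close>\<close>

definition Lag_sub :: "real \<Rightarrow> nat \<Rightarrow> (real \<Rightarrow> real) \<Rightarrow> real \<Rightarrow> real" where
  "Lag_sub \<beta> j f = (\<lambda>x. Lag_op \<beta> f x - real j * f x)"

lemma Lag_sub_apply:
  "Lag_sub \<beta> j f x = x * deriv (deriv f) x + (\<beta> + 1 - x) * deriv f x - real j * f x"
  by (simp add: Lag_sub_def Lag_op_def)

lemma Lag_op_eq_Lag_sub_0: "Lag_op \<gamma> f = Lag_sub \<gamma> 0 f"
  by (simp add: Lag_sub_def)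

lemma rhs_factor_eq_Lag_sub: "rhs_factor \<alpha> = Lag_sub (real \<alpha> + 1)"
  by (auto simp: fun_eq_iff rhs_factor_def Lag_sub_def)

lemma Ck_on_Lag_sub:
  assumes S: "open S" and f: "Ck_on (k + 2) S f"
  shows "Ck_on k S (Lag_sub \<beta> j f)"
proof -
  have "Ck_on (Suc k) S (deriv f)"
    using f by (simp add: Ck_on_Suc_iff)
  then have "Ck_on k S f" "Ck_on k S (deriv f)" "Ck_on k S (deriv (deriv f))"
    using Ck_on_le[OF f] by (simp_all add: Ck_on_Suc_iff Ck_on_SucD)
  moreover have "Ck_on k S (\<lambda>x. \<beta> + 1 - x)"
    by (intro Ck_on_diff Ck_on_const Ck_on_ident S)
  ultimately show ?thesis
    unfolding Lag_sub_def Lag_op_def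
    by (intro Ck_on_diff Ck_on_add Ck_on_mult Ck_on_ident Ck_on_const S)
qed

lemma Ck_on_fold_Lag_sub:
  "open S \<Longrightarrow> Ck_on (k + 2 * length js) S f \<Longrightarrow> Ck_on k S (fold (Lag_sub \<beta>) js f)"
proof (induction js arbitrary: f)
  case Nil then show ?case by simp
next
  case (Cons j js)
  have "Ck_on (k + 2 * length js) S (Lag_sub \<beta> j f)"
    by (rule Ck_on_Lag_sub[OF Cons.prems(1)]) (use Cons.prems(2) in \<open>simp add: algebra_simps\<close>)
  then show ?case using Cons.IH[OF Cons.prems(1)] by simp
qed

lemma Lag_sub_cong_on_open:
  assumes "open S" "x \<in> S" "\<And>z. z \<in> S \<Longrightarrow> f z = g z"
  shows "Lag_sub \<beta> j f x = Lag_sub \<beta> j g x"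
  using higher_deriv_cong_on_open[OF assms, where n = 1]
    higher_deriv_cong_on_open[OF assms, where n = 2] assms
  by (simp add: Lag_sub_apply numeral_2_eq_2)

lemma Lag_op_cong_on_open:
  "open S \<Longrightarrow> x \<in> S \<Longrightarrow> (\<And>z. z \<in> S \<Longrightarrow> f z = g z) \<Longrightarrow> Lag_op \<gamma> f x = Lag_op \<gamma> g x"
  unfolding Lag_op_eq_Lag_sub_0 by (rule Lag_sub_cong_on_open)

lemma lhs_factor_cong_on_open:
  "open S \<Longrightarrow> x \<in> S \<Longrightarrow> (\<And>z. z \<in> S \<Longrightarrow> f z = g z) \<Longrightarrow> lhs_factor j f x = lhs_factor j g x"
  using Lag_op_cong_on_open[of S x f g] by (simp add: lhs_factor_def)

lemma higher_deriv_Lag_sub: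
  assumes S: "open S" and f: "Ck_on (m + 2) S f" and x: "x \<in> S"
  shows "(deriv ^^ m) (Lag_sub \<gamma> j f) x =
    x * (deriv ^^ (m + 2)) f x + (\<gamma> + 1 + m - x) * (deriv ^^ (m + 1)) f x
    - (real m + real j) * (deriv ^^ m) f x"
  using f x
proof (induction m arbitrary: x)
  case 0 then show ?case by (simp add: Lag_sub_apply numeral_2_eq_2)
next
  case (Suc m)
  have d: "((deriv ^^ k) f has_real_derivative (deriv ^^ Suc k) f x) (at x)" if "k \<le> m + 2" for k
    using Ck_on_has_derivative[OF Suc.prems(1) _ Suc.prems(2), of k] that by simp
  have "(deriv ^^ Suc m) (Lag_sub \<gamma> j f) x = deriv ((deriv ^^ m) (Lag_sub \<gamma> j f)) x"
    by simp
  also have "\<dots> = deriv (\<lambda>z. z * (deriv ^^ (m + 2)) f z + (\<gamma> + 1 + m - z) * (deriv ^^ (m + 1)) f z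
      - (real m + real j) * (deriv ^^ m) f z) x"
    using eventually_nhds_in_open[OF S Suc.prems(2)] Suc.IH Ck_on_le[OF Suc.prems(1)]
    by (intro deriv_cong_ev) (auto elim!: eventually_mono)
  also have "\<dots> = x * (deriv ^^ (Suc m + 2)) f x + (\<gamma> + 1 + Suc m - x) * (deriv ^^ (Suc m + 1)) f x
      - (real (Suc m) + real j) * (deriv ^^ Suc m) f x"
    apply (rule DERIV_imp_deriv)
    apply (rule derivative_eq_intros d[of "m + 2"] d[of "m + 1"] d[of m] | simp)+
    apply (simp add: algebra_simps)
    done
  finally show ?case .
qed

lemma Lag_sub_low_derivs:
  assumes "open S" "Ck_on 4 S f" "x \<in> S"
  shows "Lag_sub \<gamma> j f x = x * (deriv ^^ 2) f x + (\<gamma> + 1 - x) * (deriv ^^ 1) f x - j * f x"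
    and "deriv (Lag_sub \<gamma> j f) x
      = x * (deriv ^^ 3) f x + (\<gamma> + 2 - x) * (deriv ^^ 2) f x - (1 + real j) * (deriv ^^ 1) f x"
    and "deriv (deriv (Lag_sub \<gamma> j f)) x
      = x * (deriv ^^ 4) f x + (\<gamma> + 3 - x) * (deriv ^^ 3) f x - (2 + real j) * (deriv ^^ 2) f x"
proof -
  have f: "Ck_on (m + 2) S f" if "m \<le> 2" for m
    using assms(2) that by (auto intro: Ck_on_le)
  show "Lag_sub \<gamma> j f x = x * (deriv ^^ 2) f x + (\<gamma> + 1 - x) * (deriv ^^ 1) f x - j * f x"
    using higher_deriv_Lag_sub[OF assms(1) f[of 0] assms(3), of \<gamma> j]
    by (simp add: numeral_2_eq_2)
  show "deriv (Lag_sub \<gamma> j f) x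
      = x * (deriv ^^ 3) f x + (\<gamma> + 2 - x) * (deriv ^^ 2) f x - (1 + real j) * (deriv ^^ 1) f x"
    using higher_deriv_Lag_sub[OF assms(1) f[of 1] assms(3), of \<gamma> j]
    by (simp add: numeral_3_eq_3 numeral_2_eq_2 algebra_simps)
  show "deriv (deriv (Lag_sub \<gamma> j f)) x
      = x * (deriv ^^ 4) f x + (\<gamma> + 3 - x) * (deriv ^^ 3) f x - (2 + real j) * (deriv ^^ 2) f x"
    using higher_deriv_Lag_sub[OF assms(1) f[of 2] assms(3), of \<gamma> j]
    by (simp add: numeral_3_eq_3 numeral_2_eq_2 eval_nat_numeral algebra_simps)
qed

lemma Lag_sub_Lag_sub_swap:
  assumes "open S" "Ck_on 4 S f" "x \<in> S"
  shows "Lag_sub (\<beta> + 1) (a + 1) (Lag_sub (\<beta> + k) a f) x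
       = Lag_sub (\<beta> + k + 1) (a + 1) (Lag_sub \<beta> a f) x"
  unfolding Lag_sub_apply[of "\<beta> + 1" "a + 1"] Lag_sub_apply[of "\<beta> + k + 1" "a + 1"]
  unfolding Lag_sub_low_derivs[OF assms]
  by (simp add: algebra_simps)

(* For \<gamma> = 2 j - 1 and c = j the right-hand side is lhs_factor j (Lag_op (-1) f). *)
lemma Lag_op_neg1_Lag_sub:
  assumes "open S" "Ck_on 4 S f" "x \<in> S" "x \<noteq> 0"
  shows "Lag_op (-1) (Lag_sub \<gamma> c f) x
       = Lag_op \<gamma> (Lag_op (-1) f) x - ((\<gamma> + 1) / x) * Lag_op (-1) f x - c * Lag_op (-1) f x"
  unfolding Lag_op_eq_Lag_sub_0 Lag_sub_apply[of "-1" 0 "Lag_sub \<gamma> c f"]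
    Lag_sub_apply[of \<gamma> 0 "Lag_sub (-1) 0 f"]
  unfolding Lag_sub_low_derivs[OF assms(1-3)]
  using assms(4) by (simp add: field_simps)

lemma fold_Lag_sub_shift:
  assumes S: "open S" and f: "Ck_on (2 * k + 4) S f" and x: "x \<in> S"
  shows "fold (Lag_sub (\<beta> + 1)) [1..<k + 2] f x
       = Lag_sub (\<beta> + real k + 1) (k + 1) (fold (Lag_sub \<beta>) [1..<k + 1] f) x"
  using f x
proof (induction k arbitrary: x)
  case 0 then show ?case by simp
next
  case (Suc k)
  define g where "g = fold (Lag_sub \<beta>) [1..<k + 1] f"
  have g: "Ck_on 4 S g"
    unfolding g_def by (rule Ck_on_fold_Lag_sub[OF S]) (use Suc.prems(1) in \<open>auto intro: Ck_on_le\<close>)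
  have IH: "fold (Lag_sub (\<beta> + 1)) [1..<k + 2] f z = Lag_sub (\<beta> + real k + 1) (k + 1) g z"
    if "z \<in> S" for z
    using Suc.IH[OF Ck_on_le[OF Suc.prems(1)] that] by (simp add: g_def)
  have "fold (Lag_sub (\<beta> + 1)) [1..<Suc k + 2] f x
      = Lag_sub (\<beta> + 1) (k + 2) (fold (Lag_sub (\<beta> + 1)) [1..<k + 2] f) x"
    by simp
  also have "\<dots> = Lag_sub (\<beta> + 1) (k + 2) (Lag_sub (\<beta> + real k + 1) (k + 1) g) x"
    using IH by (rule Lag_sub_cong_on_open[OF S Suc.prems(2)])
  also have "\<dots> = Lag_sub (\<beta> + (real k + 1) + 1) (k + 2) (Lag_sub \<beta> (k + 1) g) x"
    using Lag_sub_Lag_sub_swap[OF S g Suc.prems(2), of \<beta> "k + 1" "real k + 1"]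
    by (simp add: algebra_simps)
  also have "\<dots> = Lag_sub (\<beta> + real (Suc k) + 1) (Suc k + 1) (fold (Lag_sub \<beta>) [1..<Suc k + 1] f) x"
    by (simp add: g_def algebra_simps)
  finally show ?case .
qed

lemma fold_lhs_factor:
  assumes S: "open S" "0 \<notin> S" and y: "Ck_on (2 * m + 2) S y" and x: "x \<in> S"
  shows "fold lhs_factor [0..<m + 1] y x = Lag_op (-1) (fold (Lag_sub (real m)) [1..<m + 1] y) x"
  using y x
proof (induction m arbitrary: x)
  case 0 then show ?case by (simp add: lhs_factor_def)
next
  case (Suc m)
  define g where "g = fold (Lag_sub (real m)) [1..<m + 1] y"
  have g: "Ck_on 4 S g"
    unfolding g_def by (rule Ck_on_fold_Lag_sub[OF S(1)]) (use Suc.prems(1) in \<open>auto intro: Ck_on_le\<close>)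
  have IH: "fold lhs_factor [0..<m + 1] y z = Lag_op (-1) g z" if "z \<in> S" for z
    using Suc.IH[OF Ck_on_le[OF Suc.prems(1)] that] by (simp add: g_def)
  have shift: "Lag_sub (2 * real (Suc m) - 1) (Suc m) g z
             = fold (Lag_sub (real (Suc m))) [1..<Suc m + 1] y z" if "z \<in> S" for z
  proof -
    have "Ck_on (2 * m + 4) S y"
      by (rule Ck_on_le[OF Suc.prems(1)]) simp
    from fold_Lag_sub_shift[OF S(1) this that, of "real m"] show ?thesis
      by (simp add: g_def algebra_simps del: upt_Suc)
  qed
  have "fold lhs_factor [0..<Suc m + 1] y x = lhs_factor (Suc m) (fold lhs_factor [0..<m + 1] y) x"
    by simp
  also have "\<dots> = lhs_factor (Suc m) (Lag_op (-1) g) x"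
    using IH by (rule lhs_factor_cong_on_open[OF S(1) Suc.prems(2)])
  also have "\<dots> = Lag_op (-1) (Lag_sub (2 * real (Suc m) - 1) (Suc m) g) x"
  proof -
    have "x \<noteq> 0" using S(2) Suc.prems(2) by blast
    from Lag_op_neg1_Lag_sub[OF S(1) g Suc.prems(2) this] show ?thesis
      by (simp add: lhs_factor_def)
  qed
  also have "\<dots> = Lag_op (-1) (fold (Lag_sub (real (Suc m))) [1..<Suc m + 1] y) x"
    using shift by (rule Lag_op_cong_on_open[OF S(1) Suc.prems(2)])
  finally show ?case .
qed

lemma lhs_product_eq_calL:
  assumes "Ck_on (2 * \<alpha> + 4) {0<..} y" "x > 0"
  shows "(-1) ^ (\<alpha> + 1) * op_prod lhs_factor 0 (\<alpha> + 1) y x = calL \<alpha> y x"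
proof -
  have y: "Ck_on (2 * (\<alpha> + 1) + 2) {0<..} y"
    by (rule Ck_on_le[OF assms(1)]) simp
  have "fold lhs_factor [0..<(\<alpha> + 1) + 1] y x
      = Lag_op (-1) (fold (Lag_sub (real (\<alpha> + 1))) [1..<(\<alpha> + 1) + 1] y) x"
    by (rule fold_lhs_factor[OF _ _ y]) (use assms(2) in auto)
  then show ?thesis
    by (simp only: calL_def op_prod_def rhs_factor_eq_Lag_sub Suc_eq_plus1 of_nat_add of_nat_1)
qed

section \<open>Polynomial eigenfunctions\<close>

definition lag_poly :: "real \<Rightarrow> real poly \<Rightarrow> real poly" where
  "lag_poly \<gamma> q = pCons 0 (pderiv (pderiv q)) + smult (\<gamma> + 1) (pderiv q) - pCons 0 (pderiv q)"

definition lag_sub_poly :: "real \<Rightarrow> nat \<Rightarrow> real poly \<Rightarrow> real poly" where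
  "lag_sub_poly \<beta> j q = lag_poly \<beta> q - smult (real j) q"

definition dd_minus_d :: "real poly \<Rightarrow> real poly" where
  "dd_minus_d q = pderiv (pderiv q) - pderiv q"

lemma deriv_poly: "deriv (poly q) = poly (pderiv q)"
  by (rule ext, rule DERIV_imp_deriv, rule poly_DERIV)

lemma Lag_sub_poly: "Lag_sub \<beta> j (poly q) = poly (lag_sub_poly \<beta> j q)"
  by (rule ext) (simp add: Lag_sub_apply deriv_poly lag_sub_poly_def lag_poly_def algebra_simps)

lemma fold_Lag_sub_poly: "fold (Lag_sub \<beta>) js (poly q) = poly (fold (lag_sub_poly \<beta>) js q)"
  by (induction js arbitrary: q) (simp_all add: Lag_sub_poly)

lemma Lag_op_neg1_poly: "Lag_op (-1) (poly q) x = x * poly (dd_minus_d q) x"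
  by (simp add: Lag_op_def deriv_poly dd_minus_d_def algebra_simps)

lemma poly_eq_by_eval:
  fixes p q :: "real poly"
  assumes "\<And>x. poly p x = poly q x"
  shows "p = q"
  using assms by (simp flip: poly_eq_poly_eq_iff add: fun_eq_iff)

lemmas pderiv_simps = pderiv_add pderiv_diff pderiv_smult pderiv_pCons pderiv_minus

lemma dd_minus_d_lag_sub_poly:
  "dd_minus_d (lag_sub_poly \<beta> j q) = lag_sub_poly (\<beta> + 2) (Suc j) (dd_minus_d q)"
  by (rule poly_eq_by_eval)
     (simp add: dd_minus_d_def lag_sub_poly_def lag_poly_def pderiv_simps algebra_simps)

lemma dd_minus_d_fold_lag_sub_poly:
  "dd_minus_d (fold (lag_sub_poly \<beta>) js q) = fold (lag_sub_poly (\<beta> + 2)) (map Suc js) (dd_minus_d q)"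
  by (induction js arbitrary: q) (simp_all add: dd_minus_d_lag_sub_poly)

lemma dd_minus_d_smult: "dd_minus_d (smult a q) = smult a (dd_minus_d q)"
  by (simp add: dd_minus_d_def pderiv_smult smult_diff_right)

lemma lag_sub_poly_lincomb:
  "lag_sub_poly \<beta> j (smult a p + smult b q) = smult a (lag_sub_poly \<beta> j p) + smult b (lag_sub_poly \<beta> j q)"
  by (rule poly_eq_by_eval) (simp add: lag_sub_poly_def lag_poly_def pderiv_simps algebra_simps)

lemma fold_lag_sub_poly_lincomb:
  "fold (lag_sub_poly \<beta>) js (smult a p + smult b q)
     = smult a (fold (lag_sub_poly \<beta>) js p) + smult b (fold (lag_sub_poly \<beta>) js q)"
  by (induction js arbitrary: p q) (simp_all add: lag_sub_poly_lincomb)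

lemma fold_lag_sub_poly_eigen:
  assumes "lag_poly \<beta> q = smult \<mu> q"
  shows "fold (lag_sub_poly \<beta>) js q = smult (\<Prod>j\<leftarrow>js. \<mu> - real j) q"
proof (induction js)
  case Nil then show ?case by simp
next
  case (Cons j js)
  have "lag_sub_poly \<beta> j q = smult (\<mu> - real j) q + smult 0 0"
    by (simp add: lag_sub_poly_def assms smult_diff_left)
  then show ?case
    using fold_lag_sub_poly_lincomb[of \<beta> js "\<mu> - real j" q 0 0] Cons.IH by simp
qed

lemma lag_poly_diff: "lag_poly \<gamma> (p - q) = lag_poly \<gamma> p - lag_poly \<gamma> q"
  by (rule poly_eq_by_eval) (simp add: lag_poly_def pderiv_simps algebra_simps)

lemma lag_poly_add_1: "lag_poly (\<gamma> + 1) q = lag_poly \<gamma> q + pderiv q"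
  by (rule poly_eq_by_eval) (simp add: lag_poly_def pderiv_simps algebra_simps)

lemma pderiv_lag_poly: "pderiv (lag_poly \<gamma> q) = lag_poly (\<gamma> + 1) (pderiv q) - pderiv q"
  by (rule poly_eq_by_eval) (simp add: lag_poly_def pderiv_simps algebra_simps)

lemma lag_poly_eigen_pderiv:
  assumes "lag_poly \<gamma> p = smult \<mu> p"
  shows "lag_poly (\<gamma> + 1) (pderiv p) = smult (\<mu> + 1) (pderiv p)"
proof -
  have "lag_poly (\<gamma> + 1) (pderiv p) - pderiv p = smult \<mu> (pderiv p)"
    using arg_cong[OF assms, of pderiv] by (simp add: pderiv_lag_poly pderiv_smult)
  then have "lag_poly (\<gamma> + 1) (pderiv p) = smult \<mu> (pderiv p) + pderiv p"
    by (simp add: diff_eq_eq)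
  then show ?thesis
    by (simp add: smult_add_left)
qed

lemma lag_poly_eigen_diff_pderiv:
  assumes "lag_poly \<gamma> p = smult \<mu> p"
  shows "lag_poly (\<gamma> + 1) (p - pderiv p) = smult \<mu> (p - pderiv p)"
proof -
  have "lag_poly (\<gamma> + 1) (p - pderiv p) = lag_poly \<gamma> p + pderiv p - smult (\<mu> + 1) (pderiv p)"
    by (simp only: lag_poly_diff lag_poly_eigen_pderiv[OF assms] lag_poly_add_1[of \<gamma> p])
  then show ?thesis
    by (simp add: assms smult_add_left smult_diff_right)
qed

lemma dd_minus_d_times_x:
  assumes "lag_poly \<gamma> p = smult \<mu> p"
  shows "dd_minus_d (pCons 0 p) = smult (\<mu> - 1) (p - pderiv p) + smult (\<mu> - \<gamma>) (pderiv p)"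
proof (rule poly_eq_by_eval)
  fix x
  have "x * poly (pderiv (pderiv p)) x + (\<gamma> + 1) * poly (pderiv p) x - x * poly (pderiv p) x
      = \<mu> * poly p x"
    using arg_cong[OF assms, of "\<lambda>q. poly q x"] by (simp add: lag_poly_def)
  then show "poly (dd_minus_d (pCons 0 p)) x
      = poly (smult (\<mu> - 1) (p - pderiv p) + smult (\<mu> - \<gamma>) (pderiv p)) x"
    by (simp add: dd_minus_d_def pderiv_simps algebra_simps)
qed

lemma fold_lag_sub_poly_dd_minus_d_times_x:
  assumes "lag_poly \<gamma> p = smult \<mu> p"
  shows "fold (lag_sub_poly (\<gamma> + 1)) js (dd_minus_d (pCons 0 p))
    = smult ((\<mu> - 1) * (\<Prod>j\<leftarrow>js. \<mu> - real j)) (p - pderiv p)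
      + smult ((\<mu> - \<gamma>) * (\<Prod>j\<leftarrow>js. \<mu> + 1 - real j)) (pderiv p)"
  by (simp only: dd_minus_d_times_x[OF assms] fold_lag_sub_poly_lincomb smult_smult
      fold_lag_sub_poly_eigen[OF lag_poly_eigen_diff_pderiv[OF assms]]
      fold_lag_sub_poly_eigen[OF lag_poly_eigen_pderiv[OF assms]])

definition hyp1F1_coeff :: "nat \<Rightarrow> real \<Rightarrow> nat \<Rightarrow> real" where
  "hyp1F1_coeff N c k = pochhammer (- real N) k / (pochhammer c k * fact k)"

definition hyp1F1_poly :: "nat \<Rightarrow> real \<Rightarrow> real poly" where
  "hyp1F1_poly N c = (\<Sum>k\<le>N. monom (hyp1F1_coeff N c k) k)"

lemma poly_hyp1F1_poly: "poly (hyp1F1_poly N c) x = hyp1F1_term N c x"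
  by (simp add: hyp1F1_poly_def poly_sum poly_monom hyp1F1_term_def hyp1F1_coeff_def)

lemma coeff_hyp1F1_poly: "coeff (hyp1F1_poly N c) k = hyp1F1_coeff N c k"
  by (simp add: hyp1F1_poly_def coeff_sum hyp1F1_coeff_def pochhammer_of_nat_eq_0_lemma)

lemma hyp1F1_coeff_Suc:
  assumes "c > 0"
  shows "real (Suc k) * (c + real k) * hyp1F1_coeff N c (Suc k) = (real k - real N) * hyp1F1_coeff N c k"
proof -
  have "pochhammer c k \<noteq> 0" "c + real k \<noteq> 0"
    using assms pochhammer_pos[of c k] by auto
  then have "hyp1F1_coeff N c (Suc k)
      = (real k - real N) * hyp1F1_coeff N c k / ((c + real k) * real (Suc k))"
    unfolding hyp1F1_coeff_def pochhammer_Suc fact_Suc of_nat_Suc by (simp add: divide_simps)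
  with \<open>c + real k \<noteq> 0\<close> show ?thesis
    by simp
qed

lemma lag_poly_hyp1F1_poly:
  assumes "c > 0"
  shows "lag_poly (c - 1) (hyp1F1_poly N c) = smult (- real N) (hyp1F1_poly N c)"
proof (rule poly_eqI)
  fix k
  show "coeff (lag_poly (c - 1) (hyp1F1_poly N c)) k = coeff (smult (- real N) (hyp1F1_poly N c)) k"
    using hyp1F1_coeff_Suc[OF assms, of k N]
    by (cases k) (simp_all add: lag_poly_def coeff_pderiv coeff_hyp1F1_poly algebra_simps)
qed

lemma prod_list_diff_upt_pochhammer:
  "(\<Prod>j\<leftarrow>[2..<k + 2]. c - real j) = (-1) ^ k * pochhammer (2 - c) k"
proof (induction k)
  case 0 then show ?case by simp
next
  case (Suc k)
  have "[2..<Suc k + 2] = [2..<k + 2] @ [k + 2]" by simp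
  then show ?case using Suc by (simp add: pochhammer_Suc algebra_simps)
qed

lemma calL_poly:
  "calL \<alpha> (poly q) x
     = (-1) ^ (\<alpha> + 1) * (x * poly (fold (lag_sub_poly (real \<alpha> + 3)) [2..<\<alpha> + 3] (dd_minus_d q)) x)"
proof -
  have "map Suc [1..<Suc (\<alpha> + 1)] = [2..<\<alpha> + 3]" "real \<alpha> + 1 + 2 = real \<alpha> + 3"
    by (simp_all add: map_Suc_upt eval_nat_numeral del: upt_Suc)
  then show ?thesis
    by (simp only: calL_def op_prod_def rhs_factor_eq_Lag_sub fold_Lag_sub_poly Lag_op_neg1_poly
        dd_minus_d_fold_lag_sub_poly)
qed

lemma calL_poly_smult: "calL \<alpha> (poly (smult a q)) x = a * calL \<alpha> (poly q) x"
  using fold_lag_sub_poly_lincomb[of "real \<alpha> + 3" "[2..<\<alpha> + 3]" a "dd_minus_d q" 0 0]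
  by (simp add: calL_poly dd_minus_d_smult del: upt_Suc)

lemma calL_x_hyp1F1_poly:
  fixes \<alpha> n :: nat
  assumes n: "n \<ge> 1"
  defines "P \<equiv> hyp1F1_poly (n - 1) (real \<alpha> + 3)"
  shows "calL \<alpha> (poly (pCons 0 P)) x = - pochhammer (real n) (\<alpha> + 2) * poly (pCons 0 P) x"
proof -
  define js where "js = [2..<\<alpha> + 3]"
  define \<rho> where "\<rho> = - ((-1) ^ (\<alpha> + 1) * pochhammer (real n) (\<alpha> + 2))"
  have kummer: "lag_poly (real \<alpha> + 2) P = smult (1 - real n) P"
    using lag_poly_hyp1F1_poly[of "real \<alpha> + 3" "n - 1"] n by (simp add: P_def of_nat_diff add.commute)
  have "\<alpha> + 1 + 2 = \<alpha> + 3" by simp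
  then have js: "[2..<\<alpha> + 1 + 2] = js"
    by (simp only: js_def)
  have \<rho>_u: "(1 - real n - 1) * (\<Prod>j\<leftarrow>js. 1 - real n - real j) = \<rho>"
    using prod_list_diff_upt_pochhammer[where k = "\<alpha> + 1" and c = "1 - real n"]
      pochhammer_rec[of "real n" "\<alpha> + 1"]
    unfolding js by (simp add: \<rho>_def add.commute)
  have \<rho>_v: "(1 - real n - (real \<alpha> + 2)) * (\<Prod>j\<leftarrow>js. 1 - real n + 1 - real j) = \<rho>"
    using prod_list_diff_upt_pochhammer[where k = "\<alpha> + 1" and c = "2 - real n"]
      pochhammer_rec'[of "real n" "\<alpha> + 1"]
    unfolding js by (simp add: \<rho>_def algebra_simps)
  have "real \<alpha> + 2 + 1 = real \<alpha> + 3" by simp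
  with fold_lag_sub_poly_dd_minus_d_times_x[OF kummer, of js]
  have "fold (lag_sub_poly (real \<alpha> + 3)) js (dd_minus_d (pCons 0 P)) = smult \<rho> P"
    by (simp only: \<rho>_u \<rho>_v flip: smult_add_right) simp
  then show ?thesis
    by (simp add: calL_poly js_def \<rho>_def del: upt_Suc)
qed

lemma T_fun_eq_poly:
  "T_fun \<alpha> n = poly (smult (- t_coef \<alpha> n * pochhammer (real \<alpha> + 3) (n - 1) / fact (n - 1))
                        (pCons 0 (hyp1F1_poly (n - 1) (real \<alpha> + 3))))"
  by (rule ext) (simp add: T_fun_def laguerre_def poly_hyp1F1_poly add.assoc)

lemma calL_T_fun_eigen:
  assumes "n \<ge> 1"
  shows "calL \<alpha> (T_fun \<alpha> n) x + pochhammer (real n) (\<alpha> + 2) * T_fun \<alpha> n x = 0"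
  using calL_x_hyp1F1_poly[OF assms, of \<alpha> x]
  by (simp only: T_fun_eq_poly calL_poly_smult poly_smult) (simp add: algebra_simps)

theorem corollary3p3:
  fixes \<alpha> :: nat
  shows "(\<forall>y x. Ck_on (2 * \<alpha> + 4) {0<..} y \<and> x > 0 \<longrightarrow>
            (-1) ^ (\<alpha> + 1) * op_prod lhs_factor 0 (\<alpha> + 1) y x = calL \<alpha> y x)
       \<and> (\<forall>n::nat. n \<ge> 1 \<longrightarrow> (\<forall>x::real. x > 0 \<longrightarrow>
            calL \<alpha> (T_fun \<alpha> n) x + pochhammer (real n) (\<alpha> + 2) * T_fun \<alpha> n x = 0))"
  using lhs_product_eq_calL calL_T_fun_eigen by blast

end
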